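(* Let $\mathcal{M}=(E,r)$ be a matroid with rank function $r$ and girth at least $d+1$. Let $i$ be an integer with $d\leq i\leq |E|$, and let $A$ be a uniformly random subset of $E$ of size $i$. Then $$\mathbb{E}(r(A))\geq d+(r(E)-d)\frac{i-d}{|E|-d}.$$
   Context: The girth of a matroid is the size of its smallest circuit ($+\infty$ if it has no circuits). *)

theory Defs
  imports Main "HOL-Library.Extended_Nat"
begin

definition matroid_rank :: "'a set \<Rightarrow> ('a set \<Rightarrow> nat) \<Rightarrow> bool" where
  "matroid_rank E r \<longleftrightarrow> finite E
     \<and> (\<forall>A. A \<subseteq> E \<longrightarrow> r A \<le> card A)
     \<and> (\<forall>A B. A \<subseteq> B \<and> B \<subseteq> E \<longrightarrow> r A \<le> r B)
     \<and> (\<forall>A B. A \<subseteq> E \<and> B \<subseteq> E \<longrightarrow> r (A \<union> B) + r (A \<inter> B) \<le> r A + r B)"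

definition indep :: "'a set \<Rightarrow> ('a set \<Rightarrow> nat) \<Rightarrow> 'a set \<Rightarrow> bool" where
  "indep E r A \<longleftrightarrow> A \<subseteq> E \<and> r A = card A"

definition circuit :: "'a set \<Rightarrow> ('a set \<Rightarrow> nat) \<Rightarrow> 'a set \<Rightarrow> bool" where
  "circuit E r C \<longleftrightarrow> C \<subseteq> E \<and> \<not> indep E r C \<and> (\<forall>D. D \<subset> C \<longrightarrow> indep E r D)"

text \<open>Girth: size of a smallest circuit, \<infinity> if there is none.\<close>
definition girth :: "'a set \<Rightarrow> ('a set \<Rightarrow> nat) \<Rightarrow> enat" where
  "girth E r = Inf ((\<lambda>C. enat (card C)) ` {C. circuit E r C})"

definition expected_rank :: "'a set \<Rightarrow> ('a set \<Rightarrow> nat) \<Rightarrow> nat \<Rightarrow> real" where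
  "expected_rank E r i =
     (\<Sum>A\<in>{A. A \<subseteq> E \<and> card A = i}. real (r A)) / real (card E choose i)"

end

theory Submission
  imports Defs
begin

text \<open>Write \<open>N = |E|\<close> and \<open>e(k)\<close> for the expected rank of a random \<open>k\<close>-subset.
  Submodularity bounds the rank of \<open>E\<close> by \<open>r(A)\<close> plus the marginal gains
  \<open>r(A + x) - r(A)\<close> over all \<open>x \<notin> A\<close>; averaging over all \<open>k\<close>-sets \<open>A\<close> and counting
  each \<open>(k+1)\<close>-set \<open>k+1\<close> times gives
  \<open>(N - k) (r(E) - e(k+1)) \<le> (N - k - 1) (r(E) - e(k))\<close>.
  Hence the deficit \<open>r(E) - e(k)\<close> divided by \<open>N - k\<close> decreases in \<open>k\<close>, and it starts
  at \<open>k = d\<close> with \<open>e(d) = d\<close>, because sets smaller than the girth are independent.\<close>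

lemma matroid_rank_finite: "matroid_rank E r \<Longrightarrow> finite E"
  unfolding matroid_rank_def by blast

lemma matroid_rank_submod:
  "matroid_rank E r \<Longrightarrow> A \<subseteq> E \<Longrightarrow> B \<subseteq> E \<Longrightarrow> r (A \<union> B) + r (A \<inter> B) \<le> r A + r B"
  unfolding matroid_rank_def by blast

lemma dependent_contains_circuit:
  assumes "finite C" "C \<subseteq> E" "\<not> indep E r C"
  shows "\<exists>C'\<subseteq>C. circuit E r C'"
  using assms
proof (induction "card C" arbitrary: C rule: less_induct)
  case less
  show ?case
  proof (cases "circuit E r C")
    case True
    then show ?thesis by blast
  next
    case False
    then obtain D where D: "D \<subset> C" "\<not> indep E r D"
      using less.prems unfolding circuit_def by blast
    with less.prems have "card D < card C" "finite D" "D \<subseteq> E"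
      by (auto intro: psubset_card_mono finite_subset)
    with D less.hyps obtain C' where "C' \<subseteq> D" "circuit E r C'" by blast
    with D show ?thesis by blast
  qed
qed

lemma rank_eq_card_if_card_less_girth:
  assumes M: "matroid_rank E r" and A: "A \<subseteq> E" and small: "enat (card A) < girth E r"
  shows "r A = card A"
proof (rule ccontr)
  assume "r A \<noteq> card A"
  moreover have "finite A"
    using A matroid_rank_finite[OF M] by (rule finite_subset)
  ultimately obtain C where C: "C \<subseteq> A" "circuit E r C"
    using dependent_contains_circuit[of A E r] A unfolding indep_def by blast
  have "girth E r \<le> enat (card C)"
    unfolding girth_def using C(2) by (auto intro: Inf_lower)
  also have "\<dots> \<le> enat (card A)"
    using C(1) \<open>finite A\<close> by (simp add: card_mono)
  finally show False using small by simp
qed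

lemma expected_rank_below_girth:
  assumes M: "matroid_rank E r" and "enat k < girth E r" and "k \<le> card E"
  shows "expected_rank E r k = real k"
proof -
  have "(\<Sum>A | A \<subseteq> E \<and> card A = k. real (r A)) = (\<Sum>A | A \<subseteq> E \<and> card A = k. real k)"
    using assms by (intro sum.cong) (auto simp: rank_eq_card_if_card_less_girth)
  also have "\<dots> = real (card E choose k) * real k"
    using n_subsets[OF matroid_rank_finite[OF M]] by simp
  finally show ?thesis
    unfolding expected_rank_def using \<open>k \<le> card E\<close> by simp
qed

lemma rank_union_le_sum_rank_insert:
  assumes M: "matroid_rank E r" and "A \<subseteq> E" "finite F" "F \<subseteq> E" "A \<inter> F = {}"
  shows "r (A \<union> F) + card F * r A \<le> r A + (\<Sum>x\<in>F. r (insert x A))"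
  using assms(3-5)
proof (induction F rule: finite_induct)
  case empty
  then show ?case by simp
next
  case (insert x F)
  have "(A \<union> F) \<union> insert x A = A \<union> insert x F" "(A \<union> F) \<inter> insert x A = A"
    using insert by auto
  then have "r (A \<union> insert x F) + r A \<le> r (A \<union> F) + r (insert x A)"
    using matroid_rank_submod[OF M, of "A \<union> F" "insert x A"] insert.prems \<open>A \<subseteq> E\<close> by simp
  with insert show ?case by simp
qed

lemma sum_subsets_sum_insert:
  fixes f :: "'a set \<Rightarrow> 'b::comm_semiring_1"
  assumes "finite E"
  shows "(\<Sum>A | A \<subseteq> E \<and> card A = k. \<Sum>x\<in>E - A. f (insert x A))
       = of_nat (Suc k) * (\<Sum>B | B \<subseteq> E \<and> card B = Suc k. f B)"
proof -
  let ?P = "SIGMA A:{A. A \<subseteq> E \<and> card A = k}. E - A"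
  let ?Q = "SIGMA B:{B. B \<subseteq> E \<and> card B = Suc k}. B"
  have fin: "finite B" if "B \<subseteq> E" for B
    using that assms by (rule finite_subset)
  have "(\<Sum>A | A \<subseteq> E \<and> card A = k. \<Sum>x\<in>E - A. f (insert x A)) = (\<Sum>(A, x)\<in>?P. f (insert x A))"
    using assms by (intro sum.Sigma) auto
  also have "\<dots> = (\<Sum>(B, x)\<in>?Q. f B)"
    by (rule sum.reindex_bij_witness[where i = "\<lambda>(B, x). (B - {x}, x)"
                                       and j = "\<lambda>(A, x). (insert x A, x)"])
       (auto simp: fin card_Diff_singleton)
  also have "\<dots> = (\<Sum>B | B \<subseteq> E \<and> card B = Suc k. \<Sum>x\<in>B. f B)"
    using assms by (intro sum.Sigma[symmetric]) (auto simp: fin)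
  also have "\<dots> = (\<Sum>B | B \<subseteq> E \<and> card B = Suc k. of_nat (Suc k) * f B)"
    by (intro sum.cong) auto
  finally show ?thesis by (simp add: sum_distrib_left)
qed

definition rank_sum :: "'a set \<Rightarrow> ('a set \<Rightarrow> nat) \<Rightarrow> nat \<Rightarrow> nat" where
  "rank_sum E r k = (\<Sum>A | A \<subseteq> E \<and> card A = k. r A)"

lemma expected_rank_eq_rank_sum:
  "expected_rank E r k = real (rank_sum E r k) / real (card E choose k)"
  unfolding expected_rank_def rank_sum_def by simp

lemma rank_sum_step:
  assumes M: "matroid_rank E r"
  shows "(card E choose k) * r E + (card E - k) * rank_sum E r k
           \<le> rank_sum E r k + Suc k * rank_sum E r (Suc k)"
proof -
  have fin: "finite E" using M by (rule matroid_rank_finite)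
  have "r E + (card E - k) * r A \<le> r A + (\<Sum>x\<in>E - A. r (insert x A))"
    if "A \<subseteq> E" "card A = k" for A
  proof -
    have "card (E - A) = card E - k"
      using that fin by (simp add: card_Diff_subset finite_subset)
    moreover have "A \<union> (E - A) = E" using that by blast
    ultimately show ?thesis
      using rank_union_le_sum_rank_insert[OF M \<open>A \<subseteq> E\<close>, of "E - A"] fin by simp
  qed
  then have "(\<Sum>A | A \<subseteq> E \<and> card A = k. r E + (card E - k) * r A)
      \<le> (\<Sum>A | A \<subseteq> E \<and> card A = k. r A + (\<Sum>x\<in>E - A. r (insert x A)))"
    by (intro sum_mono) blast
  then show ?thesis
    unfolding rank_sum_def
    using sum_subsets_sum_insert[OF fin, where f = r and k = k] n_subsets[OF fin, of k]
    by (simp add: sum.distrib sum_distrib_left)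
qed

lemma expected_rank_step:
  assumes M: "matroid_rank E r" and k: "k < card E"
  shows "real (r E) + (real (card E) - real k - 1) * expected_rank E r k
           \<le> (real (card E) - real k) * expected_rank E r (Suc k)"
proof -
  define c where "c j = real (card E choose j)" for j
  define S where "S j = real (rank_sum E r j)" for j
  have c_pos: "c k > 0" "c (Suc k) > 0"
    unfolding c_def using k by auto
  have "real (Suc k) * c (Suc k) = (real (card E) - real k) * c k"
    using binomial_absorption[of k "card E"] binomial_absorb_comp[of "card E" k] k
    unfolding c_def by (metis of_nat_diff of_nat_mult less_imp_le)
  then have c_Suc: "real (card E) - real k = real (Suc k) * c (Suc k) / c k"
    using c_pos by (simp add: field_simps)
  have main: "c k * real (r E) + (real (card E) - real k) * S k \<le> S k + real (Suc k) * S (Suc k)"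
    using rank_sum_step[OF M, of k] k unfolding c_def S_def
    by (metis (mono_tags) of_nat_add of_nat_mult of_nat_le_iff of_nat_diff less_imp_le)
  have "real (r E) + (real (card E) - real k - 1) * (S k / c k)
      = (c k * real (r E) + (real (card E) - real k) * S k - S k) / c k"
    using c_pos by (simp add: field_simps)
  also have "\<dots> \<le> real (Suc k) * S (Suc k) / c k"
    using main c_pos by (intro divide_right_mono) auto
  also have "\<dots> = (real (card E) - real k) * (S (Suc k) / c (Suc k))"
    unfolding c_Suc using c_pos by simp
  finally show ?thesis
    unfolding expected_rank_eq_rank_sum c_def S_def .
qed

lemma ratio_step_bound:
  fixes g :: "nat \<Rightarrow> real" and N d k :: nat
  assumes decay: "\<And>j. d \<le> j \<Longrightarrow> j < N \<Longrightarrow> (real N - real j) * g (Suc j) \<le> (real N - real j - 1) * g j"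
    and "d \<le> k" "k \<le> N"
  shows "(real N - real d) * g k \<le> (real N - real k) * g d"
  using \<open>d \<le> k\<close> \<open>k \<le> N\<close>
proof (induction k rule: dec_induct)
  case base
  then show ?case by simp
next
  case (step j)
  have "(real N - real j) * ((real N - real d) * g (Suc j))
      = (real N - real d) * ((real N - real j) * g (Suc j))" by simp
  also have "\<dots> \<le> (real N - real d) * ((real N - real j - 1) * g j)"
    using step by (intro mult_left_mono decay) auto
  also have "\<dots> = (real N - real j - 1) * ((real N - real d) * g j)" by simp
  also have "\<dots> \<le> (real N - real j - 1) * ((real N - real j) * g d)"
    using step by (intro mult_left_mono) auto
  also have "\<dots> = (real N - real j) * ((real N - real j - 1) * g d)" by simp
  finally have "(real N - real d) * g (Suc j) \<le> (real N - real j - 1) * g d"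
    using step by (simp add: mult_le_cancel_left_pos)
  then show ?case by (simp add: algebra_simps)
qed

theorem lemma3p7:
  fixes E :: "'a set" and r :: "'a set \<Rightarrow> nat" and d i :: nat
  assumes "matroid_rank E r"
    and "girth E r \<ge> enat (d + 1)"
    and "d \<le> i" and "i \<le> card E"
  shows "expected_rank E r i
           \<ge> real d + (real (r E) - real d) * ((real i - real d) / (real (card E) - real d))"
proof -
  let ?N = "real (card E)" and ?R = "real (r E)"
  define g where "g k = ?R - expected_rank E r k" for k
  have base: "expected_rank E r d = real d"
    using assms by (intro expected_rank_below_girth) (auto simp: Suc_ile_eq)
  have "(?N - real d) * g i \<le> (?N - real i) * g d"
  proof (rule ratio_step_bound)
    show "(?N - real j) * g (Suc j) \<le> (?N - real j - 1) * g j" if "j < card E" for j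
      using expected_rank_step[OF assms(1) that] unfolding g_def by (simp add: algebra_simps)
  qed (use assms in auto)
  show ?thesis
  proof (cases "card E = d")
    case True
    with assms base show ?thesis by simp
  next
    case False
    with assms have "?N - real d > 0" by simp
    with \<open>(?N - real d) * g i \<le> (?N - real i) * g d\<close> show ?thesis
      unfolding g_def base by (simp add: field_simps)
  qed
qed

end
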